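(* Let $(X,T)$ be a minimal Cantor system with a sequence of CKR partitions satisfying (KR1)–(KR6), and let $\lambda\in\mathbb C$ with $|\lambda|=1$. (1) If $\lambda$ is a continuous eigenvalue of $(X,T)$, then $\sup_{1\le k\le C(n)}|\lambda^{h_k(n)}-1|\to0$ as $n\to\infty$. (2) If $$\sum_{m\ge1}\frac{\max_{1\le k\le C(m+1)}h_k(m+1)}{\min_{1\le k\le C(m)}h_k(m)}\ \max_{1\le k\le C(m)}|\lambda^{h_k(m)}-1|<\infty,$$ then $\lambda$ is a continuous eigenvalue of $(X,T)$.
   Context: CKR partitions $\mathcal P(n)=\{T^{-j}B_k(n):1\le k\le C(n),0\le j<h_k(n)\}$ (partitions of $X$, $B_k(n)$ clopen) with $\mathcal P(0)$ trivial, roof $B(n)=\bigcup_kB_k(n)$. (KR1) $B(n+1)\subseteq B(n)$; (KR2) $\mathcal P(n+1)$ refines $\mathcal P(n)$; (KR3) $\bigcap_nB(n)$ is a single point; (KR4) the partitions generate the topology; (KR5) for all $n\ge1$, $k\le C(n-1)$, $l\le C(n)$ some $0\le j<h_l(n)$ has $T^{-j}B_l(n)\subseteq B_k(n-1)$; (KR6) $B(n)\subseteq B_1(n-1)$ for $n\ge1$. A continuous eigenvalue is $\lambda$ with $f\circ T=\lambda f$ for some continuous nonzero $f:X\to\mathbb C$. *)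

theory Defs
  imports "HOL-Analysis.Analysis"
begin

text \<open>The phase space X is the whole of the (metrizable) type 'a.\<close>

definition cantor_space :: "'a::metric_space itself \<Rightarrow> bool" where
  "cantor_space _ \<longleftrightarrow> compact (UNIV :: 'a set) \<and> (UNIV :: 'a set) \<noteq> {}
     \<and> (\<forall>x::'a. connected_component_set UNIV x = {x})
     \<and> (\<forall>x::'a. x islimpt (UNIV :: 'a set))"

definition homeomorphism_map :: "('a::topological_space \<Rightarrow> 'a) \<Rightarrow> bool" where
  "homeomorphism_map T \<longleftrightarrow> bij T \<and> continuous_on UNIV T \<and> continuous_on UNIV (inv T)"

definition minimal_system :: "('a::topological_space \<Rightarrow> 'a) \<Rightarrow> bool" where
  "minimal_system T \<longleftrightarrow> (\<forall>A. closed A \<and> T ` A = A \<longrightarrow> A = {} \<or> A = UNIV)"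

definition minimal_cantor_system :: "('a::metric_space \<Rightarrow> 'a) \<Rightarrow> bool" where
  "minimal_cantor_system T \<longleftrightarrow> cantor_space TYPE('a) \<and> homeomorphism_map T \<and> minimal_system T"

definition atom :: "('a \<Rightarrow> 'a) \<Rightarrow> (nat \<Rightarrow> nat \<Rightarrow> 'a set) \<Rightarrow> nat \<Rightarrow> nat \<Rightarrow> nat \<Rightarrow> 'a set" where
  "atom T B n k j = (T ^^ j) -` B k n"

definition atom_index :: "(nat \<Rightarrow> nat) \<Rightarrow> (nat \<Rightarrow> nat \<Rightarrow> nat) \<Rightarrow> nat \<Rightarrow> (nat \<times> nat) set" where
  "atom_index C h n = {(k, j). 1 \<le> k \<and> k \<le> C n \<and> j < h k n}"

definition atoms :: "('a \<Rightarrow> 'a) \<Rightarrow> (nat \<Rightarrow> nat) \<Rightarrow> (nat \<Rightarrow> nat \<Rightarrow> nat) \<Rightarrow> (nat \<Rightarrow> nat \<Rightarrow> 'a set) \<Rightarrow> nat \<Rightarrow> 'a set set" where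
  "atoms T C h B n = (\<lambda>(k, j). atom T B n k j) ` atom_index C h n"

definition roof :: "(nat \<Rightarrow> nat) \<Rightarrow> (nat \<Rightarrow> nat \<Rightarrow> 'a set) \<Rightarrow> nat \<Rightarrow> 'a set" where
  "roof C B n = (\<Union>k\<in>{1..C n}. B k n)"

definition CKR_partition :: "('a::topological_space \<Rightarrow> 'a) \<Rightarrow> (nat \<Rightarrow> nat) \<Rightarrow> (nat \<Rightarrow> nat \<Rightarrow> nat) \<Rightarrow> (nat \<Rightarrow> nat \<Rightarrow> 'a set) \<Rightarrow> nat \<Rightarrow> bool" where
  "CKR_partition T C h B n \<longleftrightarrow>
     C n \<ge> 1
     \<and> (\<forall>k\<in>{1..C n}. h k n \<ge> 1 \<and> open (B k n) \<and> closed (B k n))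
     \<and> (\<forall>p\<in>atom_index C h n. atom T B n (fst p) (snd p) \<noteq> {})
     \<and> (\<forall>p\<in>atom_index C h n. \<forall>q\<in>atom_index C h n. p \<noteq> q \<longrightarrow>
            atom T B n (fst p) (snd p) \<inter> atom T B n (fst q) (snd q) = {})
     \<and> \<Union>(atoms T C h B n) = UNIV"

definition CKR_sequence :: "('a::topological_space \<Rightarrow> 'a) \<Rightarrow> (nat \<Rightarrow> nat) \<Rightarrow> (nat \<Rightarrow> nat \<Rightarrow> nat) \<Rightarrow> (nat \<Rightarrow> nat \<Rightarrow> 'a set) \<Rightarrow> bool" where
  "CKR_sequence T C h B \<longleftrightarrow>
     (\<forall>n. CKR_partition T C h B n)
     \<comment> \<open>P(0) trivial\<close>
     \<and> C 0 = 1 \<and> h 1 0 = 1 \<and> B 1 0 = UNIV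
     \<comment> \<open>KR1\<close>
     \<and> (\<forall>n. roof C B (Suc n) \<subseteq> roof C B n)
     \<comment> \<open>KR2\<close>
     \<and> (\<forall>n. \<forall>P\<in>atoms T C h B (Suc n). \<exists>Q\<in>atoms T C h B n. P \<subseteq> Q)
     \<comment> \<open>KR3\<close>
     \<and> (\<exists>x. (\<Inter>n. roof C B n) = {x})
     \<comment> \<open>KR4\<close>
     \<and> topological_basis (\<Union>n. atoms T C h B n)
     \<comment> \<open>KR5\<close>
     \<and> (\<forall>n\<ge>1. \<forall>k\<in>{1..C (n-1)}. \<forall>l\<in>{1..C n}. \<exists>j<h l n. atom T B n l j \<subseteq> B k (n-1))
     \<comment> \<open>KR6\<close>
     \<and> (\<forall>n\<ge>1. roof C B n \<subseteq> B 1 (n-1))"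

definition continuous_eigenvalue :: "('a::topological_space \<Rightarrow> 'a) \<Rightarrow> complex \<Rightarrow> bool" where
  "continuous_eigenvalue T c \<longleftrightarrow>
     (\<exists>f::'a \<Rightarrow> complex. continuous_on UNIV f \<and> (\<exists>x. f x \<noteq> 0) \<and> (\<forall>x. f (T x) = c * f x))"

end

theory Submission
  imports Defs
begin

(*
  For each level n let tau_n(x) be the entry time of x into the roof B(n),
  i.e. the least t with T^t x in B(n).  On the atom T^{-j} B_k(n) the entry time equals j,
  so tau_n is locally constant and lam^tau_n is continuous.

  (1) A continuous eigenfunction f has constant modulus by minimality.  The roofs B(n) shrink
  to the point of (KR3), and every tower k of level n contains a roof point w such that
  T^{h_k(n)} w is again in the roof; uniform continuity of f then makes
  |lam^{h_k(n)} - 1| |f| = |f(T^{h_k(n)} w) - f(w)| uniformly small.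

  (2) Between two visits to the roof B(n) the orbit runs through complete towers of level n, so
  a return time d satisfies |lam^d - 1| <= d / min_k h_k(n) * max_k |lam^{h_k(n)} - 1|.  Since
  tau_n <= tau_{n+1} < max_k h_k(n+1), the continuous functions f_n = lam^{-tau_n} satisfy
  |f_{n+1} - f_n| <= (n-th term of the series).  They converge uniformly to a continuous F of
  modulus 1 with F o T = lam F away from the point of (KR3), hence everywhere because X has
  no isolated points.
*)

lemma norm_power_add_sub_one:
  fixes lam :: "'a::real_normed_div_algebra"
  assumes "norm lam = 1"
  shows "norm (lam ^ (a + b) - 1) \<le> norm (lam ^ a - 1) + norm (lam ^ b - 1)"
proof -
  have "lam ^ (a + b) - 1 = lam ^ a * (lam ^ b - 1) + (lam ^ a - 1)"
    by (simp add: power_add algebra_simps)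
  then have "norm (lam ^ (a + b) - 1) \<le> norm (lam ^ a * (lam ^ b - 1)) + norm (lam ^ a - 1)"
    by (metis norm_triangle_ineq)
  also have "norm (lam ^ a * (lam ^ b - 1)) = norm (lam ^ b - 1)"
    using assms by (simp add: norm_mult norm_power)
  finally show ?thesis by simp
qed

lemma norm_inverse_power_diff:
  fixes lam :: "'a::real_normed_field"
  assumes "norm lam = 1" and "i \<le> j"
  shows "norm (inverse lam ^ j - inverse lam ^ i) = norm (lam ^ (j - i) - 1)"
proof -
  have "lam \<noteq> 0" using assms(1) by auto
  then have "lam ^ j * (inverse lam ^ j - inverse lam ^ i) = - (lam ^ (j - i) - 1)"
    using assms(2) by (simp add: field_simps power_diff power_inverse)
  moreover have "norm (lam ^ j * (inverse lam ^ j - inverse lam ^ i))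
      = norm (inverse lam ^ j - inverse lam ^ i)"
    using assms(1) by (simp add: norm_mult norm_power)
  ultimately show ?thesis by (metis norm_minus_cancel)
qed

lemma continuous_limit_of_summable_increments:
  fixes f :: "nat \<Rightarrow> 'a::topological_space \<Rightarrow> 'b::banach"
  assumes cont: "\<And>n. continuous_on UNIV (f n)"
    and incr: "\<And>n x. norm (f (Suc n) x - f n x) \<le> a n"
    and summ: "summable a"
  obtains F where "continuous_on UNIV F" and "\<And>x. (\<lambda>n. f n x) \<longlonglongrightarrow> F x"
proof
  define g where "g i x = f (Suc i) x - f i x" for i x
  define F where "F x = f 0 x + (\<Sum>i. g i x)" for x
  have telescope: "f 0 x + (\<Sum>i<n. g i x) = f n x" for n x
    using sum_lessThan_telescope[of "\<lambda>i. f i x" n] by (simp add: g_def)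
  have "uniform_limit UNIV (\<lambda>n x. \<Sum>i<n. g i x) (\<lambda>x. \<Sum>i. g i x) sequentially"
    by (rule Weierstrass_m_test[OF _ summ]) (simp add: g_def incr)
  from uniform_limit_add[OF uniform_limit_const[where S=UNIV and c="f 0"] this]
  have "uniform_limit UNIV (\<lambda>n x. f 0 x + (\<Sum>i<n. g i x)) F sequentially"
    unfolding F_def .
  then have unif: "uniform_limit UNIV f F sequentially"
    by (simp add: telescope)
  show "continuous_on UNIV F"
    by (rule uniform_limit_theorem[OF _ unif]) (simp_all add: cont)
  show "(\<lambda>n. f n x) \<longlonglongrightarrow> F x" for x
    using tendsto_uniform_limitI[OF unif] by simp
qed

lemma continuous_agree_at_limit_point:
  fixes f g :: "'a::topological_space \<Rightarrow> 'b::t2_space"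
  assumes "continuous_on UNIV f" and "continuous_on UNIV g"
    and "x islimpt (UNIV :: 'a set)" and agree: "\<And>y. y \<noteq> x \<Longrightarrow> f y = g y"
  shows "f y = g y"
proof (cases "y = x")
  case True
  have closed: "closed {y. f y = g y}"
    using assms(1,2) by (rule closed_Collect_eq)
  have "x islimpt (- {x})"
    using assms(3) unfolding islimpt_def by auto
  then have "x islimpt {y. f y = g y}"
    by (rule islimpt_subset) (use agree in auto)
  then show ?thesis using closed closed_limpt True by blast
qed (rule agree)

text \<open>In a minimal system an eigenfunction for a unimodular eigenvalue has constant modulus:
  each level set of its modulus is closed and invariant.\<close>

lemma eigenfunction_norm_constant:
  fixes T :: "'a::topological_space \<Rightarrow> 'a" and f :: "'a \<Rightarrow> 'b::real_normed_div_algebra"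
  assumes "minimal_system T" and "surj T" and "continuous_on UNIV f"
    and eigen: "\<And>x. f (T x) = lam * f x" and "norm lam = 1"
  shows "norm (f x) = norm (f y)"
proof -
  define A where "A = {z. norm (f z) = norm (f y)}"
  have norm_T: "norm (f (T z)) = norm (f z)" for z
    using assms(5) by (simp add: eigen norm_mult)
  have "closed A"
    unfolding A_def using assms(3) by (intro closed_Collect_eq continuous_intros) auto
  moreover have "T ` A = A"
  proof
    show "T ` A \<subseteq> A" unfolding A_def using norm_T by auto
    show "A \<subseteq> T ` A"
    proof
      fix z assume "z \<in> A"
      moreover obtain w where "z = T w" using \<open>surj T\<close> by (metis surjD)
      ultimately show "z \<in> T ` A" unfolding A_def using norm_T by auto
    qed
  qed
  ultimately have "A = {} \<or> A = UNIV"
    using assms(1) unfolding minimal_system_def by blast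
  moreover have "y \<in> A" unfolding A_def by simp
  ultimately show ?thesis unfolding A_def by blast
qed

lemma eigenfunction_orbit_difference:
  fixes f :: "'a \<Rightarrow> 'b::real_normed_div_algebra"
  assumes eigen: "\<And>x. f (T x) = lam * f x"
  shows "norm (f ((T ^^ m) w) - f w) = norm (lam ^ m - 1) * norm (f w)"
proof -
  have "f ((T ^^ m) w) = lam ^ m * f w"
    by (induction m) (simp_all add: eigen mult.assoc)
  then have "f ((T ^^ m) w) - f w = (lam ^ m - 1) * f w"
    by (simp add: algebra_simps)
  then show ?thesis by (simp add: norm_mult)
qed

lemma nested_closed_shrink:
  fixes K :: "nat \<Rightarrow> 'a::metric_space set"
  assumes "compact (UNIV :: 'a set)" and closed: "\<And>n. closed (K n)"
    and dec: "\<And>m n. m \<le> n \<Longrightarrow> K n \<subseteq> K m"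
    and single: "(\<Inter>n. K n) = {x0}" and "d > 0"
  shows "\<exists>N. \<forall>n\<ge>N. K n \<subseteq> ball x0 d"
proof (rule ccontr)
  assume "\<not> ?thesis"
  then have outside: "K N - ball x0 d \<noteq> {}" for N
    using dec by blast
  have "UNIV \<inter> (\<Inter>n. K n - ball x0 d) \<noteq> {}"
  proof (rule compact_imp_fip_image[OF assms(1)])
    show "closed (K n - ball x0 d)" for n by (intro closed_Diff closed open_ball)
    fix I :: "nat set" assume "finite I"
    show "UNIV \<inter> (\<Inter>n\<in>I. K n - ball x0 d) \<noteq> {}"
    proof (cases "I = {}")
      case False
      then have "K (Max I) - ball x0 d \<subseteq> (\<Inter>n\<in>I. K n - ball x0 d)"
        using dec \<open>finite I\<close> by (meson Diff_mono INT_greatest Max_ge order_refl)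
      then show ?thesis using outside[of "Max I"] by blast
    qed simp
  qed
  then show False using single \<open>d > 0\<close> by auto
qed

lemma funpow_continuous_on:
  fixes T :: "'a::topological_space \<Rightarrow> 'a"
  assumes "continuous_on UNIV T"
  shows "continuous_on UNIV (T ^^ j)"
proof (induction j)
  case (Suc j)
  have "continuous_on UNIV (T \<circ> (T ^^ j))"
    using continuous_on_compose[OF Suc] continuous_on_subset[OF assms] by blast
  then show ?case by simp
qed (simp add: continuous_on_id)

lemma funpow_Suc_apply: "(f ^^ Suc m) x = (f ^^ m) (f x)"
  by (simp only: funpow_Suc_right o_apply)

definition entry_time :: "('a \<Rightarrow> 'a) \<Rightarrow> (nat \<Rightarrow> nat) \<Rightarrow> (nat \<Rightarrow> nat \<Rightarrow> 'a set) \<Rightarrow> nat \<Rightarrow> 'a \<Rightarrow> nat" where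
  "entry_time T C B n x = (LEAST t. (T ^^ t) x \<in> roof C B n)"

definition min_height :: "(nat \<Rightarrow> nat) \<Rightarrow> (nat \<Rightarrow> nat \<Rightarrow> nat) \<Rightarrow> nat \<Rightarrow> real" where
  "min_height C h n = real (Min ((\<lambda>k. h k n) ` {1..C n}))"

definition max_height :: "(nat \<Rightarrow> nat) \<Rightarrow> (nat \<Rightarrow> nat \<Rightarrow> nat) \<Rightarrow> nat \<Rightarrow> real" where
  "max_height C h n = real (Max ((\<lambda>k. h k n) ` {1..C n}))"

definition height_defect :: "(nat \<Rightarrow> nat) \<Rightarrow> (nat \<Rightarrow> nat \<Rightarrow> nat) \<Rightarrow> complex \<Rightarrow> nat \<Rightarrow> real" where
  "height_defect C h lam n = Max ((\<lambda>k. cmod (lam ^ h k n - 1)) ` {1..C n})"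

context
  fixes T :: "'a::metric_space \<Rightarrow> 'a"
    and C :: "nat \<Rightarrow> nat" and h :: "nat \<Rightarrow> nat \<Rightarrow> nat" and B :: "nat \<Rightarrow> nat \<Rightarrow> 'a set"
  assumes CKR: "CKR_sequence T C h B"
begin

lemma partition: "CKR_partition T C h B n"
  using CKR unfolding CKR_sequence_def by (elim conjE) blast

lemma tower_count_pos: "C n \<ge> 1"
  using partition[of n] unfolding CKR_partition_def by (elim conjE)

lemma tower_facts: "\<forall>k\<in>{1..C n}. h k n \<ge> 1 \<and> open (B k n) \<and> closed (B k n)"
  using partition[of n] unfolding CKR_partition_def by (elim conjE)

lemma height_pos: "k \<in> {1..C n} \<Longrightarrow> h k n \<ge> 1"
  and base_open: "k \<in> {1..C n} \<Longrightarrow> open (B k n)"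
  and base_closed: "k \<in> {1..C n} \<Longrightarrow> closed (B k n)"
  using tower_facts[of n] by simp_all

lemma atom_nonempty: "(k, j) \<in> atom_index C h n \<Longrightarrow> atom T B n k j \<noteq> {}"
proof -
  have "\<forall>p\<in>atom_index C h n. atom T B n (fst p) (snd p) \<noteq> {}"
    using partition[of n] unfolding CKR_partition_def by (elim conjE)
  then show "(k, j) \<in> atom_index C h n \<Longrightarrow> atom T B n k j \<noteq> {}" by force
qed

lemma atom_disjoint:
  assumes "(k, j) \<in> atom_index C h n" "(k', j') \<in> atom_index C h n"
    and "x \<in> atom T B n k j" "x \<in> atom T B n k' j'"
  shows "(k, j) = (k', j')"
proof -
  have disj: "\<forall>p\<in>atom_index C h n. \<forall>q\<in>atom_index C h n. p \<noteq> q \<longrightarrow>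
          atom T B n (fst p) (snd p) \<inter> atom T B n (fst q) (snd q) = {}"
    using partition[of n] unfolding CKR_partition_def by (elim conjE)
  show ?thesis
  proof (rule ccontr)
    assume "(k, j) \<noteq> (k', j')"
    from disj[rule_format, OF assms(1,2) this] show False using assms(3,4) by simp blast
  qed
qed

lemma atom_cover: "\<exists>k j. (k, j) \<in> atom_index C h n \<and> x \<in> atom T B n k j"
proof -
  have "x \<in> \<Union>(atoms T C h B n)" using partition[of n] unfolding CKR_partition_def by simp
  then show ?thesis unfolding atoms_def by auto
qed

lemma roof_iff: "x \<in> roof C B n \<longleftrightarrow> (\<exists>k\<in>{1..C n}. x \<in> B k n)"
  by (simp add: roof_def)

lemma roof_closed: "closed (roof C B n)"
  unfolding roof_def by (intro closed_UN) (auto intro: base_closed)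

lemma roof_antimono: "m \<le> n \<Longrightarrow> roof C B n \<subseteq> roof C B m"
proof (rule lift_Suc_antimono_le[of "roof C B"])
  show "roof C B (Suc n) \<subseteq> roof C B n" for n
    using CKR unfolding CKR_sequence_def by (elim conjE) blast
qed

lemma roof_singleton: "\<exists>x0. (\<Inter>n. roof C B n) = {x0}"
  using CKR unfolding CKR_sequence_def by (elim conjE) assumption

lemma atom_shift:
  assumes "x \<in> atom T B n k j" and "t \<le> j"
  shows "(T ^^ t) x \<in> atom T B n k (j - t)"
proof -
  have "(T ^^ (j - t)) ((T ^^ t) x) = (T ^^ j) x"
    using assms(2) by (metis funpow_add le_add_diff_inverse2 o_apply)
  then show ?thesis using assms(1) by (simp add: atom_def)
qed

lemma atom_not_in_roof:
  assumes "(k, j) \<in> atom_index C h n" and "j > 0" and "x \<in> atom T B n k j"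
  shows "x \<notin> roof C B n"
proof
  assume "x \<in> roof C B n"
  then obtain k' where k': "k' \<in> {1..C n}" "x \<in> atom T B n k' 0"
    by (auto simp: roof_iff atom_def)
  then have "(k', 0) \<in> atom_index C h n" using height_pos[OF k'(1)] by (auto simp: atom_index_def)
  from atom_disjoint[OF assms(1) this assms(3) k'(2)] show False using assms(2) by simp
qed

lemma entry_time_atom:
  assumes "(k, j) \<in> atom_index C h n" and "x \<in> atom T B n k j"
  shows "entry_time T C B n x = j"
  unfolding entry_time_def
proof (rule Least_equality)
  show "(T ^^ j) x \<in> roof C B n"
    using assms by (auto simp: roof_iff atom_def atom_index_def)
next
  fix t assume t: "(T ^^ t) x \<in> roof C B n"
  show "j \<le> t"
  proof (rule ccontr)
    assume "\<not> j \<le> t"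
    moreover have "(k, j - t) \<in> atom_index C h n" using assms(1) by (auto simp: atom_index_def)
    ultimately show False
      using atom_not_in_roof[of k "j - t" n "(T ^^ t) x"] atom_shift[OF assms(2)] t by simp
  qed
qed

lemma entry_time_lt_height: "\<exists>k\<in>{1..C n}. entry_time T C B n x < h k n"
proof -
  obtain k j where "(k, j) \<in> atom_index C h n" "x \<in> atom T B n k j"
    using atom_cover by blast
  then show ?thesis using entry_time_atom by (auto simp: atom_index_def)
qed

lemma entry_time_in_roof: "(T ^^ entry_time T C B n x) x \<in> roof C B n"
proof -
  obtain k j where "(k, j) \<in> atom_index C h n" "x \<in> atom T B n k j"
    using atom_cover by blast
  then have "(T ^^ j) x \<in> roof C B n" by (auto simp: atom_index_def atom_def roof_iff)
  then show ?thesis unfolding entry_time_def by (rule LeastI)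
qed

lemma entry_time_le: "(T ^^ t) x \<in> roof C B n \<Longrightarrow> entry_time T C B n x \<le> t"
  unfolding entry_time_def by (rule Least_le)

lemma entry_time_step:
  assumes "x \<notin> roof C B n"
  shows "entry_time T C B n x = Suc (entry_time T C B n (T x))"
proof -
  have "(T ^^ entry_time T C B n x) x \<in> roof C B n" by (rule entry_time_in_roof)
  from Least_Suc[of "\<lambda>t. (T ^^ t) x \<in> roof C B n", OF this]
  show ?thesis using assms unfolding entry_time_def by (simp add: funpow_Suc_apply del: funpow.simps)
qed

text \<open>The entry time is constant on each (open) atom, so every function of it is continuous.\<close>

lemma entry_time_continuous:
  assumes contT: "continuous_on UNIV T"
  shows "continuous_on UNIV (\<lambda>x. g (entry_time T C B n x) :: 'b::topological_space)"
  unfolding continuous_on_eq_continuous_at[OF open_UNIV]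
proof
  fix x :: 'a
  obtain k j where kj: "(k, j) \<in> atom_index C h n" "x \<in> atom T B n k j"
    using atom_cover by blast
  have "open (atom T B n k j)"
    unfolding atom_def using kj(1)
    by (intro continuous_imp_open_vimage[OF funpow_continuous_on[OF contT]] base_open)
      (auto simp: atom_index_def)
  moreover have "g (entry_time T C B n y) = g (entry_time T C B n x)" if "y \<in> atom T B n k j" for y
    using entry_time_atom[OF kj(1)] kj(2) that by simp
  ultimately have "eventually (\<lambda>y. g (entry_time T C B n y) = g (entry_time T C B n x)) (at x)"
    unfolding eventually_at_topological using kj(2) by blast
  then show "isCont (\<lambda>x. g (entry_time T C B n x)) x"
    unfolding continuous_at by (rule tendsto_eventually)
qed

lemma first_return:
  assumes "y \<in> roof C B n"
  obtains k where "k \<in> {1..C n}" and "(T ^^ h k n) y \<in> roof C B n"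
    and "\<And>t. 0 < t \<Longrightarrow> (T ^^ t) y \<in> roof C B n \<Longrightarrow> h k n \<le> t"
proof -
  obtain k j where kj: "(k, j) \<in> atom_index C h n" "T y \<in> atom T B n k j"
    using atom_cover by blast
  have k: "k \<in> {1..C n}" using kj(1) by (auto simp: atom_index_def)
  have top: "h k n = Suc j"
  proof (rule ccontr)
    assume "h k n \<noteq> Suc j"
    then have "(k, Suc j) \<in> atom_index C h n" using kj(1) by (auto simp: atom_index_def)
    moreover have "y \<in> atom T B n k (Suc j)"
      using kj(2) by (simp add: atom_def funpow_Suc_apply del: funpow.simps)
    ultimately show False using atom_not_in_roof assms by blast
  qed
  show ?thesis
  proof
    show "k \<in> {1..C n}" by (rule k)
    show "(T ^^ h k n) y \<in> roof C B n"
      using kj(2) k by (auto simp: top funpow_Suc_apply atom_def roof_iff simp del: funpow.simps)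
    fix t assume "0 < t" and t_roof: "(T ^^ t) y \<in> roof C B n"
    then obtain t' where t: "t = Suc t'" using gr0_conv_Suc by blast
    then have "(T ^^ t') (T y) \<in> roof C B n"
      using t_roof by (simp add: funpow_Suc_apply del: funpow.simps)
    then have "j \<le> t'" using entry_time_le entry_time_atom[OF kj] by metis
    then show "h k n \<le> t" using top t by simp
  qed
qed

text \<open>Every tower contains a roof point whose image after a full turn is again in the roof:
  the preimage of a point on the top floor.\<close>

lemma tower_return:
  assumes "surj T" and k: "k \<in> {1..C n}"
  shows "\<exists>w\<in>roof C B n. (T ^^ h k n) w \<in> roof C B n"
proof -
  have hk: "h k n = Suc (h k n - 1)" using height_pos[OF k] by simp
  have top: "(k, h k n - 1) \<in> atom_index C h n"
    using k height_pos[OF k] by (auto simp: atom_index_def)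
  obtain z where z: "z \<in> atom T B n k (h k n - 1)" using atom_nonempty[OF top] by blast
  obtain w where Tw: "z = T w" using \<open>surj T\<close> by (metis surjD)
  obtain k' j' where kj: "(k', j') \<in> atom_index C h n" "w \<in> atom T B n k' j'"
    using atom_cover by blast
  have "j' = 0"
  proof (rule ccontr)
    assume "j' \<noteq> 0"
    then have "z \<in> atom T B n k' (j' - 1)" and "(k', j' - 1) \<in> atom_index C h n"
      using atom_shift[OF kj(2), of 1] Tw kj(1) by (auto simp: atom_index_def)
    from atom_disjoint[OF top this(2) z this(1)] show False
      using kj(1) \<open>j' \<noteq> 0\<close> by (auto simp: atom_index_def)
  qed
  then have "w \<in> roof C B n" using kj by (auto simp: atom_index_def atom_def roof_iff)
  moreover have "(T ^^ h k n) w \<in> roof C B n"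
    using z k Tw by (subst hk) (auto simp: funpow_Suc_apply atom_def roof_iff simp del: funpow.simps)
  ultimately show ?thesis by blast
qed

lemma min_height_ge_one: "min_height C h n \<ge> 1"
proof -
  have "Min ((\<lambda>k. h k n) ` {1..C n}) \<ge> 1"
    using tower_count_pos[of n] height_pos[of _ n] by (subst Min_ge_iff) auto
  then show ?thesis unfolding min_height_def by simp
qed

lemma height_defect_ge: "k \<in> {1..C n} \<Longrightarrow> cmod (lam ^ h k n - 1) \<le> height_defect C h lam n"
  unfolding height_defect_def by simp

lemma height_ge_min: "k \<in> {1..C n} \<Longrightarrow> min_height C h n \<le> real (h k n)"
  unfolding min_height_def by simp

lemma height_le_max: "k \<in> {1..C n} \<Longrightarrow> real (h k n) \<le> max_height C h n"
  unfolding max_height_def by simp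

lemma height_defect_nonneg: "0 \<le> height_defect C h lam n"
proof -
  have "cmod (lam ^ h 1 n - 1) \<le> height_defect C h lam n"
    using height_defect_ge tower_count_pos[of n] by simp
  then show ?thesis using norm_ge_zero order_trans by blast
qed

lemma tower_defect_scaled:
  assumes "k \<in> {1..C n}"
  shows "cmod (lam ^ h k n - 1) \<le> real (h k n) / min_height C h n * height_defect C h lam n"
proof -
  have "1 \<le> real (h k n) / min_height C h n"
    using height_ge_min[OF assms] min_height_ge_one[of n] by (simp add: le_divide_eq)
  then have "height_defect C h lam n \<le> real (h k n) / min_height C h n * height_defect C h lam n"
    using mult_right_mono[OF _ height_defect_nonneg] by fastforce
  then show ?thesis using height_defect_ge[OF assms, where lam=lam] by linarith
qed

text \<open>A return time \<open>d\<close> from the roof to itself is a sum of tower heights \<open>h_k(n)\<close>,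
  so by subadditivity \<open>|lam^d - 1| \<le> d / min_k h_k(n) * max_k |lam^h_k(n) - 1|\<close>.\<close>

lemma return_time_defect:
  assumes lam: "cmod lam = 1"
  shows "y \<in> roof C B n \<Longrightarrow> (T ^^ d) y \<in> roof C B n
     \<Longrightarrow> cmod (lam ^ d - 1) \<le> real d / min_height C h n * height_defect C h lam n"
proof (induction d arbitrary: y rule: less_induct)
  case (less d)
  show ?case
  proof (cases "d = 0")
    case False
    obtain k where k: "k \<in> {1..C n}" "(T ^^ h k n) y \<in> roof C B n"
      and first: "h k n \<le> d"
      using first_return[OF less.prems(1)] False less.prems(2) by (metis neq0_conv)
    have "(T ^^ (d - h k n)) ((T ^^ h k n) y) = (T ^^ d) y"
      using first by (metis funpow_add le_add_diff_inverse2 o_apply)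
    then have rest: "cmod (lam ^ (d - h k n) - 1) \<le> real (d - h k n) / min_height C h n * height_defect C h lam n"
      using less.IH[of "d - h k n"] k(2) less.prems(2) height_pos[OF k(1)] False by simp
    have "cmod (lam ^ d - 1) \<le> cmod (lam ^ (d - h k n) - 1) + cmod (lam ^ h k n - 1)"
      using norm_power_add_sub_one[OF lam, of "d - h k n" "h k n"] first by simp
    also have "\<dots> \<le> (real (d - h k n) + real (h k n)) / min_height C h n * height_defect C h lam n"
      using add_mono[OF rest tower_defect_scaled[OF k(1), where lam=lam]]
      by (simp add: add_divide_distrib distrib_right)
    also have "\<dots> = real d / min_height C h n * height_defect C h lam n"
      using first by (simp add: of_nat_diff)
    finally show ?thesis .
  qed simp
qed

text \<open>Key estimate: the entry times into two consecutive roofs differ by a return time of level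
  \<open>n\<close> that is smaller than the maximal height of level \<open>n + 1\<close>.\<close>

lemma entry_time_increment:
  assumes lam: "cmod lam = 1"
  shows "cmod (inverse lam ^ entry_time T C B (Suc n) x - inverse lam ^ entry_time T C B n x)
     \<le> max_height C h (Suc n) / min_height C h n * height_defect C h lam n"
proof -
  define i where "i = entry_time T C B n x"
  define j where "j = entry_time T C B (Suc n) x"
  have j_roof: "(T ^^ j) x \<in> roof C B n"
    unfolding j_def using entry_time_in_roof[of "Suc n" x] roof_antimono[of n "Suc n"] by auto
  then have "i \<le> j" unfolding i_def by (rule entry_time_le)
  have "(T ^^ (j - i)) ((T ^^ i) x) = (T ^^ j) x"
    using \<open>i \<le> j\<close> by (metis funpow_add le_add_diff_inverse2 o_apply)
  then have "cmod (lam ^ (j - i) - 1) \<le> real (j - i) / min_height C h n * height_defect C h lam n"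
    using return_time_defect[OF lam, of "(T ^^ i) x" n "j - i"] j_roof entry_time_in_roof
    unfolding i_def by simp
  also have "\<dots> \<le> max_height C h (Suc n) / min_height C h n * height_defect C h lam n"
  proof -
    obtain l where "l \<in> {1..C (Suc n)}" "j < h l (Suc n)"
      using entry_time_lt_height unfolding j_def by blast
    then have "real (j - i) \<le> max_height C h (Suc n)"
      using height_le_max[of l "Suc n"] by linarith
    then show ?thesis
      using min_height_ge_one[of n] height_defect_nonneg[of lam n]
      by (intro mult_right_mono divide_right_mono) auto
  qed
  finally show ?thesis
    using norm_inverse_power_diff[OF lam \<open>i \<le> j\<close>] unfolding i_def j_def by simp
qed

text \<open>By (KR3) and compactness the roofs become arbitrarily small.\<close>

lemma roof_diameter_small:
  assumes "compact (UNIV :: 'a set)" and "e > 0"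
  shows "\<exists>N. \<forall>n\<ge>N. \<forall>w\<in>roof C B n. \<forall>w'\<in>roof C B n. dist w w' < e"
proof -
  obtain x0 where x0: "(\<Inter>n. roof C B n) = {x0}" using roof_singleton by blast
  obtain N where N: "\<forall>n\<ge>N. roof C B n \<subseteq> ball x0 (e / 2)"
    using nested_closed_shrink[OF assms(1) roof_closed roof_antimono x0, of "e / 2"] assms(2)
    by auto
  have "dist w w' < e" if "n \<ge> N" "w \<in> roof C B n" "w' \<in> roof C B n" for n w w'
  proof -
    have "w \<in> ball x0 (e / 2)" and "w' \<in> ball x0 (e / 2)" using N that by blast+
    then have "dist x0 w < e / 2" and "dist x0 w' < e / 2" by simp_all
    then show ?thesis by (rule dist_triangle_half_r)
  qed
  then show ?thesis by blast
qed

lemma entry_time_eigen_eventually: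
  fixes lam :: "'b::field"
  assumes "lam \<noteq> 0" and "x \<notin> (\<Inter>n. roof C B n)"
  shows "\<forall>\<^sub>F n in sequentially.
           lam * inverse lam ^ entry_time T C B n x = inverse lam ^ entry_time T C B n (T x)"
proof -
  obtain N where N: "x \<notin> roof C B N" using assms(2) by blast
  have "lam * inverse lam ^ Suc m = (lam * inverse lam) * inverse lam ^ m" for m
    by (simp only: power_Suc mult.assoc)
  then have "lam * inverse lam ^ Suc m = inverse lam ^ m" for m
    using assms(1) by simp
  moreover have "entry_time T C B n x = Suc (entry_time T C B n (T x))" if "n \<ge> N" for n
    using N roof_antimono[OF that] entry_time_step by blast
  ultimately show ?thesis
    by (intro eventually_sequentiallyI[of N]) simp
qed

text \<open>Part (1): along a continuous eigenfunction, a full turn around any tower moves a point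
  of the (shrinking) roof to another point of the roof, so the defects tend to zero.\<close>

lemma eigenvalue_imp_height_defect_tendsto_zero:
  assumes "surj T" and "compact (UNIV :: 'a set)" and "minimal_system T"
    and lam: "cmod lam = 1" and "continuous_eigenvalue T lam"
  shows "height_defect C h lam \<longlonglongrightarrow> 0"
proof -
  obtain f :: "'a \<Rightarrow> complex" and x1 where f_cont: "continuous_on UNIV f" and "f x1 \<noteq> 0"
    and eigen: "\<And>x. f (T x) = lam * f x"
    using assms(5) unfolding continuous_eigenvalue_def by blast
  define c where "c = cmod (f x1)"
  have "c > 0" unfolding c_def using \<open>f x1 \<noteq> 0\<close> by simp
  have norm_f: "cmod (f x) = c" for x
    unfolding c_def using eigenfunction_norm_constant[OF assms(3,1) f_cont eigen lam] .
  have unif: "uniformly_continuous_on UNIV f"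
    using compact_uniformly_continuous[OF f_cont assms(2)] .
  show ?thesis
  proof (rule LIMSEQ_I)
    fix r :: real assume "r > 0"
    obtain e where "e > 0" and e: "\<And>x x'. dist x' x < e \<Longrightarrow> dist (f x') (f x) < r * c"
      using unif \<open>r > 0\<close> \<open>c > 0\<close> unfolding uniformly_continuous_on_def by (metis UNIV_I mult_pos_pos)
    obtain N where N: "\<forall>n\<ge>N. \<forall>w\<in>roof C B n. \<forall>w'\<in>roof C B n. dist w w' < e"
      using roof_diameter_small[OF assms(2) \<open>e > 0\<close>] by blast
    have "height_defect C h lam n < r" if "n \<ge> N" for n
    proof -
      have "cmod (lam ^ h k n - 1) < r" if k: "k \<in> {1..C n}" for k
      proof -
        obtain w where "w \<in> roof C B n" "(T ^^ h k n) w \<in> roof C B n"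
          using tower_return[OF assms(1) k] by blast
        then have "dist (f ((T ^^ h k n) w)) (f w) < r * c"
          using N \<open>n \<ge> N\<close> e by blast
        then show ?thesis
          using eigenfunction_orbit_difference[where f=f and T=T, OF eigen] \<open>c > 0\<close> by (simp add: dist_norm norm_f)
      qed
      then show ?thesis
        unfolding height_defect_def using tower_count_pos[of n] by (subst Max_less_iff) auto
    qed
    then show "\<exists>N. \<forall>n\<ge>N. norm (height_defect C h lam n - 0) < r"
      using height_defect_nonneg by auto
  qed
qed

text \<open>Part (2): the functions \<open>lam^-entry_time\<close> converge to a continuous eigenfunction.\<close>

lemma summable_imp_eigenvalue:
  assumes contT: "continuous_on UNIV T" and no_isolated: "\<And>x. x islimpt (UNIV :: 'a set)"
    and lam: "cmod lam = 1"
    and summ: "summable (\<lambda>m. max_height C h (Suc (Suc m)) / min_height C h (Suc m)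
                              * height_defect C h lam (Suc m))"
  shows "continuous_eigenvalue T lam"
proof -
  have "lam \<noteq> 0" using lam by auto
  define f where "f n x = inverse lam ^ entry_time T C B (Suc n) x" for n x
  have f_cont: "continuous_on UNIV (f n)" for n
    unfolding f_def by (rule entry_time_continuous[OF contT])
  have f_incr: "cmod (f (Suc n) x - f n x)
      \<le> max_height C h (Suc (Suc n)) / min_height C h (Suc n) * height_defect C h lam (Suc n)" for n x
    unfolding f_def by (rule entry_time_increment[OF lam])
  obtain F where F_cont: "continuous_on UNIV F" and F_lim: "\<And>x. (\<lambda>n. f n x) \<longlonglongrightarrow> F x"
    using continuous_limit_of_summable_increments[OF f_cont f_incr summ] by blast
  have norm_F: "cmod (F x) = 1" for x
  proof -
    have "cmod (f n x) = 1" for n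
      unfolding f_def using lam by (simp add: norm_power norm_inverse)
    then have "(\<lambda>n. 1) \<longlonglongrightarrow> cmod (F x)"
      using tendsto_norm[OF F_lim[of x]] by simp
    from LIMSEQ_unique[OF tendsto_const this] show ?thesis by simp
  qed
  obtain x0 where x0: "(\<Inter>n. roof C B n) = {x0}" using roof_singleton by blast
  have eigen_off: "F (T x) = lam * F x" if "x \<noteq> x0" for x
  proof -
    have "x \<notin> (\<Inter>n. roof C B n)" using that x0 by simp
    from entry_time_eigen_eventually[OF \<open>lam \<noteq> 0\<close> this]
    have "\<forall>\<^sub>F n in sequentially. lam * f n x = f n (T x)"
      unfolding f_def
      by (subst eventually_sequentially_Suc[where P = "\<lambda>n. lam * inverse lam ^ entry_time T C B n x
                                                   = inverse lam ^ entry_time T C B n (T x)"])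
    moreover have "(\<lambda>n. lam * f n x) \<longlonglongrightarrow> lam * F x"
      by (intro tendsto_mult tendsto_const F_lim)
    ultimately have "(\<lambda>n. f n (T x)) \<longlonglongrightarrow> lam * F x"
      by (rule Lim_transform_eventually[rotated])
    then show ?thesis by (rule LIMSEQ_unique[OF F_lim])
  qed
  have "continuous_on UNIV (F \<circ> T)"
    using continuous_on_compose[OF contT] continuous_on_subset[OF F_cont] by blast
  moreover have "continuous_on UNIV (\<lambda>x. lam * F x)"
    by (intro continuous_intros F_cont)
  ultimately have "(F \<circ> T) x = lam * F x" for x
    by (rule continuous_agree_at_limit_point[OF _ _ no_isolated[of x0]]) (simp add: eigen_off)
  then have "F (T x) = lam * F x" for x by simp
  moreover have "F x0 \<noteq> 0" using norm_F[of x0] by auto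
  ultimately show ?thesis
    unfolding continuous_eigenvalue_def using F_cont by blast
qed

end

theorem mainTheorem9:
  fixes T :: "'a::metric_space \<Rightarrow> 'a"
    and C :: "nat \<Rightarrow> nat" and h :: "nat \<Rightarrow> nat \<Rightarrow> nat" and B :: "nat \<Rightarrow> nat \<Rightarrow> 'a set"
    and lam :: complex
  assumes "minimal_cantor_system T"
    and "CKR_sequence T C h B"
    and "cmod lam = 1"
  shows "(continuous_eigenvalue T lam \<longrightarrow>
            (\<lambda>n. Max ((\<lambda>k. cmod (lam ^ h k n - 1)) ` {1..C n})) \<longlonglongrightarrow> 0)
       \<and> (summable (\<lambda>m. (real (Max ((\<lambda>k. h k (Suc m + 1)) ` {1..C (Suc m + 1)}))
                          / real (Min ((\<lambda>k. h k (Suc m)) ` {1..C (Suc m)})))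
                         * Max ((\<lambda>k. cmod (lam ^ h k (Suc m) - 1)) ` {1..C (Suc m)}))
            \<longrightarrow> continuous_eigenvalue T lam)"
proof -
  have "compact (UNIV :: 'a set)" and "\<And>x::'a. x islimpt UNIV"
    and "bij T" and "continuous_on UNIV T" and "minimal_system T"
    using assms(1) unfolding minimal_cantor_system_def cantor_space_def homeomorphism_map_def
    by auto
  moreover have "(\<lambda>n. Max ((\<lambda>k. cmod (lam ^ h k n - 1)) ` {1..C n})) = height_defect C h lam"
    by (simp add: height_defect_def fun_eq_iff)
  moreover have "(\<lambda>m. (real (Max ((\<lambda>k. h k (Suc m + 1)) ` {1..C (Suc m + 1)}))
                          / real (Min ((\<lambda>k. h k (Suc m)) ` {1..C (Suc m)})))
                         * Max ((\<lambda>k. cmod (lam ^ h k (Suc m) - 1)) ` {1..C (Suc m)}))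
      = (\<lambda>m. max_height C h (Suc (Suc m)) / min_height C h (Suc m) * height_defect C h lam (Suc m))"
    by (simp add: height_defect_def max_height_def min_height_def fun_eq_iff)
  ultimately show ?thesis
    using eigenvalue_imp_height_defect_tendsto_zero[OF assms(2) bij_is_surj, of lam]
      summable_imp_eigenvalue[OF assms(2), of lam] assms(3)
    by auto
qed

end
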